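(* Let $(\mathcal{F}_\alpha)_{\alpha<\omega_1}$ and $(\mathcal{G}_\alpha)_{\alpha<\omega_1}$ be transfinite families defined by two (possibly different) approximating families. Then for every $\alpha<\omega_1$ and every infinite $N\subset\mathbb{N}$ there is an infinite $M\subset N$ such that $\mathcal{G}_\alpha^M\subset\mathcal{F}_\alpha$.
   Context: An approximating family assigns to each countable limit ordinal $\alpha$ finite sets $A_n(\alpha)\subset[0,\alpha)$, $n\in\mathbb{N}$, with $A_n(\alpha)\subset A_{n+1}(\alpha)$ and $\lim_n\max A_n(\alpha)=\alpha$. The associated transfinite family $(\mathcal{F}_\alpha)$ of sets of finite subsets of $\mathbb{N}$: $\mathcal{F}_0=\{\emptyset\}$; $\mathcal{F}_{\beta+1}=\{\{n\}\cup E:n\in\mathbb{N},E\in\mathcal{F}_\beta\}\cup\{\emptyset\}$; for limit $\alpha$, $\mathcal{F}_\alpha=\{\emptyset\}\cup\{E\ne\emptyset:E\in\bigcup_{\beta\in A_{\min E}(\alpha)}\mathcal{F}_\beta\}$. For $M=\{m_1<m_2<\dots\}$ and a set $\mathcal{A}$ of finite subsets of $\mathbb{N}$, $\mathcal{A}^M=\{\{m_i:i\in E\}:E\in\mathcal{A}\}$. *)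

theory Defs
  imports Main "HOL-Library.Infinite_Set" "HOL-Library.Countable_Set"
begin

text \<open>Countable ordinals are modelled by the elements of a well-ordered type 'a
  in which every element has only countably many predecessors (i.e. 'a is,
  up to order isomorphism, an initial segment of omega_1).\<close>

definition is_zero :: "'a::wellorder \<Rightarrow> bool" where
  "is_zero \<alpha> \<longleftrightarrow> (\<forall>\<beta>. \<alpha> \<le> \<beta>)"

definition is_succ_of :: "'a::wellorder \<Rightarrow> 'a \<Rightarrow> bool" where
  "is_succ_of \<beta> \<alpha> \<longleftrightarrow> \<beta> < \<alpha> \<and> (\<forall>\<gamma>. \<beta> < \<gamma> \<longrightarrow> \<alpha> \<le> \<gamma>)"

definition is_limit :: "'a::wellorder \<Rightarrow> bool" where
  "is_limit \<alpha> \<longleftrightarrow> \<not> is_zero \<alpha> \<and> \<not> (\<exists>\<beta>. is_succ_of \<beta> \<alpha>)"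

definition approx_family :: "('a::wellorder \<Rightarrow> nat \<Rightarrow> 'a set) \<Rightarrow> bool" where
  "approx_family A \<longleftrightarrow>
     (\<forall>\<alpha>. is_limit \<alpha> \<longrightarrow>
        (\<forall>n. finite (A \<alpha> n) \<and> A \<alpha> n \<subseteq> {..<\<alpha>} \<and> A \<alpha> n \<subseteq> A \<alpha> (Suc n)) \<and>
        (\<forall>\<gamma><\<alpha>. \<exists>n. \<exists>\<beta>\<in>A \<alpha> n. \<gamma> < \<beta>))"

definition tfam_step ::
  "('a::wellorder \<Rightarrow> nat \<Rightarrow> 'a set) \<Rightarrow> ('a \<Rightarrow> nat set set) \<Rightarrow> 'a \<Rightarrow> nat set set" where
  "tfam_step A rec \<alpha> =
     (if is_zero \<alpha> then {{}}
      else if (\<exists>\<beta>. is_succ_of \<beta> \<alpha>)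
        then {insert n E | n E. E \<in> rec (THE \<beta>. is_succ_of \<beta> \<alpha>)} \<union> {{}}
      else {{}} \<union> {E. E \<noteq> {} \<and> (\<exists>\<beta>\<in>A \<alpha> (Min E). E \<in> rec \<beta>)})"

definition tfam :: "('a::wellorder \<Rightarrow> nat \<Rightarrow> 'a set) \<Rightarrow> 'a \<Rightarrow> nat set set" where
  "tfam A = wfrec {(x, y). x < y} (tfam_step A)"

text \<open>A^M = {{m_i : i \<in> E} : E \<in> A}, with m_0 < m_1 < ... the increasing
  enumeration of M (indices start at 0, as does nat).\<close>
definition restr_fam :: "nat set set \<Rightarrow> nat set \<Rightarrow> nat set set" where
  "restr_fam \<A> M = {enumerate M ` E | E. E \<in> \<A>}"

end

theory Submission
  imports Defs
begin

lemma ordinal_cases: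
  fixes \<alpha> :: "'a::wellorder"
  obtains "is_zero \<alpha>" | \<beta> where "is_succ_of \<beta> \<alpha>" | "is_limit \<alpha>"
  unfolding is_limit_def by blast

lemma is_succ_of_less: "is_succ_of \<beta> \<alpha> \<Longrightarrow> \<beta> < \<alpha>"
  unfolding is_succ_of_def by simp

lemma is_succ_of_unique: "is_succ_of \<beta> \<alpha> \<Longrightarrow> is_succ_of \<gamma> \<alpha> \<Longrightarrow> \<beta> = \<gamma>"
  unfolding is_succ_of_def by (metis leD linorder_neqE)

lemma approx_family_finite: "approx_family A \<Longrightarrow> is_limit \<alpha> \<Longrightarrow> finite (A \<alpha> n)"
  unfolding approx_family_def by blast

lemma approx_family_less: "approx_family A \<Longrightarrow> is_limit \<alpha> \<Longrightarrow> \<beta> \<in> A \<alpha> n \<Longrightarrow> \<beta> < \<alpha>"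
  unfolding approx_family_def by blast

lemma approx_family_cofinal:
  "approx_family A \<Longrightarrow> is_limit \<alpha> \<Longrightarrow> \<gamma> < \<alpha> \<Longrightarrow> \<exists>n. \<exists>\<beta>\<in>A \<alpha> n. \<gamma> < \<beta>"
  unfolding approx_family_def by blast

lemma approx_family_mono:
  assumes "approx_family A" "is_limit \<alpha>" "m \<le> n"
  shows "A \<alpha> m \<subseteq> A \<alpha> n"
  using assms lift_Suc_mono_le[of "A \<alpha>"] unfolding approx_family_def by blast

lemma tfam_unfold: "tfam A \<alpha> = tfam_step A (cut (tfam A) {(x, y). x < y} \<alpha>) \<alpha>"
  unfolding tfam_def by (rule wfrec[OF wf])

lemma empty_in_tfam: "{} \<in> tfam A \<alpha>"
  by (subst tfam_unfold) (simp add: tfam_step_def)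

lemma tfam_zero: "is_zero \<alpha> \<Longrightarrow> tfam A \<alpha> = {{}}"
  by (subst tfam_unfold) (simp add: tfam_step_def)

lemma tfam_succ:
  assumes "is_succ_of \<beta> \<alpha>"
  shows "tfam A \<alpha> = {insert n E | n E. E \<in> tfam A \<beta>} \<union> {{}}"
proof -
  have "\<not> is_zero \<alpha>"
    using assms unfolding is_zero_def is_succ_of_def by (meson leD)
  moreover have "(THE \<gamma>. is_succ_of \<gamma> \<alpha>) = \<beta>"
    using assms is_succ_of_unique by blast
  ultimately show ?thesis
    using assms by (subst tfam_unfold) (auto simp: tfam_step_def cut_apply is_succ_of_less)
qed

lemma tfam_limit:
  assumes "approx_family A" "is_limit \<alpha>"
  shows "tfam A \<alpha> = {{}} \<union> {E. E \<noteq> {} \<and> (\<exists>\<beta>\<in>A \<alpha> (Min E). E \<in> tfam A \<beta>)}"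
proof -
  have "\<beta> \<in> A \<alpha> n \<Longrightarrow> cut (tfam A) {(x, y). x < y} \<alpha> \<beta> = tfam A \<beta>" for \<beta> n
    using approx_family_less[OF assms] by (simp add: cut_apply)
  then show ?thesis
    using assms(2) by (subst tfam_unfold) (auto simp: tfam_step_def is_limit_def)
qed

lemma tfam_limitI:
  assumes "approx_family A" "is_limit \<alpha>" "\<beta> \<in> A \<alpha> n" "n \<le> Min E" "E \<in> tfam A \<beta>"
  shows "E \<in> tfam A \<alpha>"
proof (cases "E = {}")
  case True
  then show ?thesis by (simp add: empty_in_tfam)
next
  case False
  with assms approx_family_mono[OF assms(1,2,4)] show ?thesis
    by (subst tfam_limit[OF assms(1,2)]) blast
qed

lemma finite_tfam: "approx_family A \<Longrightarrow> E \<in> tfam A \<alpha> \<Longrightarrow> finite E"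
proof (induction \<alpha> arbitrary: E rule: less_induct)
  case (less \<alpha>)
  show ?case
  proof (cases \<alpha> rule: ordinal_cases)
    case 1
    with less.prems show ?thesis by (simp add: tfam_zero)
  next
    case (2 \<beta>)
    with less.prems less.IH[OF is_succ_of_less[OF 2]] show ?thesis by (auto simp: tfam_succ)
  next
    case 3
    with less show ?thesis by (auto simp: tfam_limit dest: approx_family_less)
  qed
qed

lemma tfam_eventually_increasing:
  assumes "approx_family A" "\<beta> < \<gamma>"
  shows "\<forall>\<^sub>F n in sequentially. \<forall>E\<in>tfam A \<beta>. n \<le> Min E \<longrightarrow> E \<in> tfam A \<gamma>"
  using assms(2)
proof (induction \<gamma> arbitrary: \<beta> rule: less_induct)
  case (less \<gamma>)
  show ?case
  proof (cases \<gamma> rule: ordinal_cases)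
    case 1
    with less.prems show ?thesis unfolding is_zero_def by (meson leD)
  next
    case (2 \<delta>)
    have into_succ: "E \<in> tfam A \<gamma>" if "E \<in> tfam A \<delta>" for E
    proof (cases "E = {}")
      case False
      with that finite_tfam[OF assms(1)] have "E = insert (Min E) E" by (simp add: insert_absorb)
      with that 2 show ?thesis by (auto simp: tfam_succ)
    qed (simp add: empty_in_tfam)
    have "\<beta> \<le> \<delta>"
      using 2 less.prems unfolding is_succ_of_def by (meson leD leI)
    then consider "\<beta> = \<delta>" | "\<beta> < \<delta>" by fastforce
    then show ?thesis
    proof cases
      case 1
      with into_succ show ?thesis by simp
    next
      case 2
      show ?thesis
        by (rule eventually_mono[OF less.IH[OF is_succ_of_less[OF \<open>is_succ_of \<delta> \<gamma>\<close>] 2]])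
          (use into_succ in blast)
    qed
  next
    case 3
    obtain k \<delta> where \<delta>: "\<delta> \<in> A \<gamma> k" "\<beta> < \<delta>"
      using approx_family_cofinal[OF assms(1) 3 less.prems] by blast
    have "\<forall>\<^sub>F n in sequentially. k \<le> n \<and> (\<forall>E\<in>tfam A \<beta>. n \<le> Min E \<longrightarrow> E \<in> tfam A \<delta>)"
      using less.IH[OF approx_family_less[OF assms(1) 3 \<delta>(1)] \<delta>(2)] by (simp add: eventually_conj)
    then show ?thesis
      by (rule eventually_mono) (use tfam_limitI[OF assms(1) 3 \<delta>(1)] in auto)
  qed
qed

definition spreads_into :: "nat set \<Rightarrow> nat set set \<Rightarrow> nat set set \<Rightarrow> bool" where
  "spreads_into M \<G> \<F> \<longleftrightarrow> (\<forall>E\<in>\<G>. \<forall>f. strict_mono f \<and> range f \<subseteq> M \<longrightarrow> f ` E \<in> \<F>)"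

lemma spreads_into_subset: "spreads_into M \<G> \<F> \<Longrightarrow> M' \<subseteq> M \<Longrightarrow> spreads_into M' \<G> \<F>"
  unfolding spreads_into_def by blast

lemma restr_fam_subset_if_spreads_into:
  assumes "spreads_into M \<G> \<F>" "infinite M"
  shows "restr_fam \<G> M \<subseteq> \<F>"
proof
  fix X
  assume "X \<in> restr_fam \<G> M"
  then obtain E where "E \<in> \<G>" "X = enumerate M ` E"
    unfolding restr_fam_def by blast
  moreover have "range (enumerate M) \<subseteq> M"
    using enumerate_in_set[OF assms(2)] by blast
  ultimately show "X \<in> \<F>"
    using assms(1) strict_mono_enumerate[OF assms(2)] unfolding spreads_into_def by blast
qed

lemma ex_infinite_subset_finite_ball:
  assumes "finite S" "infinite N"
    and "\<And>s N. s \<in> S \<Longrightarrow> infinite N \<Longrightarrow> \<exists>M\<subseteq>N. infinite M \<and> P s M"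
    and "\<And>s M M'. P s M \<Longrightarrow> M' \<subseteq> M \<Longrightarrow> P s M'"
  shows "\<exists>M\<subseteq>N. infinite M \<and> (\<forall>s\<in>S. P s M)"
  using assms(1,2,3)
proof (induction S arbitrary: N rule: finite_induct)
  case empty
  then show ?case by blast
next
  case (insert s S)
  obtain M1 where M1: "M1 \<subseteq> N" "infinite M1" "P s M1"
    using insert.prems by blast
  obtain M2 where M2: "M2 \<subseteq> M1" "infinite M2" "\<forall>s\<in>S. P s M2"
    using insert.IH[OF M1(2)] insert.prems(2) by blast
  have "P s M2"
    using assms(4)[OF M1(3) M2(1)] .
  with M1(1) M2 show ?case by blast
qed

lemma nested_infinite_subsets:
  assumes "infinite N" "\<And>k N. infinite N \<Longrightarrow> \<exists>M\<subseteq>N. infinite M \<and> P k M"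
  obtains Ms :: "nat \<Rightarrow> nat set"
  where "Ms 0 \<subseteq> N" "antimono Ms" "\<And>k. infinite (Ms k)" "\<And>k. P k (Ms k)"
proof -
  have "\<exists>Ms. \<forall>k. (Ms k \<subseteq> N \<and> infinite (Ms k) \<and> P k (Ms k)) \<and> Ms (Suc k) \<subseteq> Ms k"
  proof (rule dependent_nat_choice)
    show "\<exists>M. M \<subseteq> N \<and> infinite M \<and> P 0 M"
      using assms by blast
  next
    fix M k
    assume "M \<subseteq> N \<and> infinite M \<and> P k M"
    then show "\<exists>M'. (M' \<subseteq> N \<and> infinite M' \<and> P (Suc k) M') \<and> M' \<subseteq> M"
      using assms(2)[of M "Suc k"] by blast
  qed
  then show ?thesis
    using that unfolding antimono_iff_le_Suc by blast
qed

lemma diagonal_sequence: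
  fixes Ms :: "nat \<Rightarrow> nat set"
  assumes "\<And>k. infinite (Ms k)"
  obtains m where "strict_mono m" "\<And>k. m k \<in> Ms k" "\<And>k. b k \<le> m k"
proof -
  have unbounded: "\<exists>x\<in>Ms k. n \<le> x" for k n
    using assms[of k] unfolding infinite_nat_iff_unbounded_le by blast
  have "\<exists>m. \<forall>k. (m k \<in> Ms k \<and> b k \<le> m k) \<and> m k < m (Suc k)"
  proof (rule dependent_nat_choice)
    show "\<exists>x. x \<in> Ms 0 \<and> b 0 \<le> x" using unbounded by blast
  next
    fix x k
    obtain y where "y \<in> Ms (Suc k)" "max (b (Suc k)) (Suc x) \<le> y"
      using unbounded by blast
    then show "\<exists>y. (y \<in> Ms (Suc k) \<and> b (Suc k) \<le> y) \<and> x < y" by auto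
  qed
  then show ?thesis
    using that unfolding strict_mono_Suc_iff by blast
qed

lemma strict_mono_le_if_range_subset:
  fixes m f :: "nat \<Rightarrow> nat"
  assumes "strict_mono m" "strict_mono f" "range f \<subseteq> range m"
  shows "m i \<le> f i"
proof -
  have "\<forall>i. \<exists>j. f i = m j"
    using assms(3) by blast
  then obtain h where h: "\<And>i. f i = m (h i)"
    by metis
  have "strict_mono h"
    using assms(2) unfolding strict_mono_def h by (simp add: strict_mono_less[OF assms(1)])
  then show ?thesis
    using assms(1) strict_mono_imp_increasing strict_mono_less_eq h by metis
qed

text \<open>The maps in \<^const>\<open>spreads_into\<close> are defined on all of \<open>\<nat>\<close>, so a map that lands in \<open>M\<close> only from
  \<open>k\<close> on is repaired by sending \<open>i < k\<close> to the \<open>i\<close>-th element of \<open>M\<close>.\<close>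

lemma strict_mono_patch_below:
  fixes f :: "nat \<Rightarrow> nat"
  assumes "strict_mono f" "infinite M" "f ` {k..} \<subseteq> M" "enumerate M k \<le> f k"
  obtains g where "strict_mono g" "range g \<subseteq> M" "\<And>i. k \<le> i \<Longrightarrow> g i = f i"
proof
  let ?g = "\<lambda>i. if i < k then enumerate M i else f i"
  show "strict_mono ?g"
  proof (rule strict_monoI)
    fix i j :: nat
    assume "i < j"
    have "enumerate M i < f j" if "i < k" "k \<le> j"
    proof -
      have "enumerate M i < enumerate M k"
        using enumerate_mono[OF \<open>i < k\<close> assms(2)] .
      also have "\<dots> \<le> f j"
        using assms(4) strict_mono_less_eq[OF assms(1)] that(2) order_trans by blast
      finally show ?thesis .
    qed
    with \<open>i < j\<close> show "?g i < ?g j"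
      using assms(1,2) by (simp add: strict_mono_less)
  qed
  show "range ?g \<subseteq> M"
    using assms(2,3) by (auto simp: enumerate_in_set)
qed simp

lemma diagonal_spread_tail:
  fixes Ms :: "nat \<Rightarrow> nat set" and m f :: "nat \<Rightarrow> nat"
  assumes "antimono Ms" "infinite (Ms k)" "strict_mono m" "\<And>j. m j \<in> Ms j"
    and "enumerate (Ms k) k \<le> m k" "strict_mono f" "range f \<subseteq> range m"
  obtains g where "strict_mono g" "range g \<subseteq> Ms k" "\<And>i. k \<le> i \<Longrightarrow> g i = f i"
proof -
  have m_le_f: "m i \<le> f i" for i
    using strict_mono_le_if_range_subset[OF assms(3,6,7)] .
  have "f i \<in> Ms k" if "k \<le> i" for i
  proof -
    obtain j where j: "f i = m j"
      using assms(7) by blast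
    have "m k \<le> f i"
      using m_le_f[of k] strict_mono_less_eq[OF assms(6)] that order_trans by blast
    then have "k \<le> j"
      using j strict_mono_less_eq[OF assms(3)] by simp
    then have "Ms j \<subseteq> Ms k"
      using antimonoD[OF assms(1)] by blast
    then show ?thesis
      using j assms(4)[of j] by auto
  qed
  moreover have "enumerate (Ms k) k \<le> f k"
    using assms(5) m_le_f[of k] by (rule order_trans)
  ultimately show ?thesis
    using strict_mono_patch_below[OF assms(6,2)] that by blast
qed

lemma spreads_into_tfam_succ:
  assumes "is_succ_of \<beta> \<alpha>" "spreads_into M (tfam B \<beta>) (tfam A \<beta>)"
  shows "spreads_into M (tfam B \<alpha>) (tfam A \<alpha>)"
  unfolding spreads_into_def
proof (intro ballI allI impI)
  fix E and f :: "nat \<Rightarrow> nat"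
  assume "E \<in> tfam B \<alpha>" "strict_mono f \<and> range f \<subseteq> M"
  then consider "E = {}" | n E' where "E = insert n E'" "f ` E' \<in> tfam A \<beta>"
    using assms unfolding tfam_succ[OF assms(1)] spreads_into_def by blast
  then show "f ` E \<in> tfam A \<alpha>"
    by cases (auto simp: tfam_succ[OF assms(1)])
qed

lemma spreads_into_tfam_limit_diagonal:
  fixes Ms :: "nat \<Rightarrow> nat set" and m L :: "nat \<Rightarrow> nat"
  assumes B: "approx_family B" and lim: "is_limit \<alpha>"
    and Ms: "antimono Ms" "\<And>k. infinite (Ms k)"
      "\<And>k \<beta>. \<beta> \<in> B \<alpha> k \<Longrightarrow> spreads_into (Ms k) (tfam B \<beta>) (tfam A \<beta>)"
    and L: "\<And>k \<beta> E. \<beta> \<in> B \<alpha> k \<Longrightarrow> E \<in> tfam A \<beta> \<Longrightarrow> L k \<le> Min E \<Longrightarrow> E \<in> tfam A \<alpha>"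
    and m: "strict_mono m" "\<And>k. m k \<in> Ms k" "\<And>k. L k \<le> m k" "\<And>k. enumerate (Ms k) k \<le> m k"
  shows "spreads_into (range m) (tfam B \<alpha>) (tfam A \<alpha>)"
  unfolding spreads_into_def
proof (intro ballI allI impI)
  fix E and f :: "nat \<Rightarrow> nat"
  assume E: "E \<in> tfam B \<alpha>" and f: "strict_mono f \<and> range f \<subseteq> range m"
  show "f ` E \<in> tfam A \<alpha>"
  proof (cases "E = {}")
    case True
    then show ?thesis by (simp add: empty_in_tfam)
  next
    case False
    define k where "k = Min E"
    have fin: "finite E"
      using finite_tfam[OF B E] .
    obtain \<beta> where \<beta>: "\<beta> \<in> B \<alpha> k" "E \<in> tfam B \<beta>"
      using E False unfolding tfam_limit[OF B lim] k_def by blast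
    obtain g where g: "strict_mono g" "range g \<subseteq> Ms k" "\<And>i. k \<le> i \<Longrightarrow> g i = f i"
      using diagonal_spread_tail[OF Ms(1,2) m(1,2,4)] f by metis
    have "g ` E = f ` E"
      using g(3) fin unfolding k_def by (simp cong: image_cong)
    then have "f ` E \<in> tfam A \<beta>"
      using Ms(3)[OF \<beta>(1)] \<beta>(2) g(1,2) unfolding spreads_into_def by metis
    moreover have "L k \<le> Min (f ` E)"
    proof -
      have "Min (f ` E) = f k"
        unfolding k_def using mono_Min_commute[OF strict_mono_mono fin False] f by metis
      then show ?thesis
        using m(3)[of k] strict_mono_le_if_range_subset[OF m(1)] f by (metis order_trans)
    qed
    ultimately show ?thesis
      using L \<beta>(1) by blast
  qed
qed

lemma spreads_into_tfam_limit:
  assumes A: "approx_family A" and B: "approx_family B" and lim: "is_limit \<alpha>"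
    and "infinite N"
    and IH: "\<And>\<beta> N. \<beta> < \<alpha> \<Longrightarrow> infinite N \<Longrightarrow>
      \<exists>M\<subseteq>N. infinite M \<and> spreads_into M (tfam B \<beta>) (tfam A \<beta>)"
  shows "\<exists>M\<subseteq>N. infinite M \<and> spreads_into M (tfam B \<alpha>) (tfam A \<alpha>)"
proof -
  have refine: "\<exists>M\<subseteq>N'. infinite M \<and> (\<forall>\<beta>\<in>B \<alpha> k. spreads_into M (tfam B \<beta>) (tfam A \<beta>))"
    if "infinite N'" for k N'
    by (rule ex_infinite_subset_finite_ball[where P = "\<lambda>\<beta> M. spreads_into M (tfam B \<beta>) (tfam A \<beta>)",
          OF approx_family_finite[OF B lim] that])
      (use IH approx_family_less[OF B lim] spreads_into_subset in blast)+
  obtain Ms where Ms: "Ms 0 \<subseteq> N" "antimono Ms" "\<And>k. infinite (Ms k)"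
    "\<And>k. \<forall>\<beta>\<in>B \<alpha> k. spreads_into (Ms k) (tfam B \<beta>) (tfam A \<beta>)"
    using nested_infinite_subsets[where P = "\<lambda>k M. \<forall>\<beta>\<in>B \<alpha> k. spreads_into M (tfam B \<beta>) (tfam A \<beta>)",
        OF \<open>infinite N\<close> refine] by blast
  have "\<forall>\<^sub>F n in sequentially. \<forall>\<beta>\<in>B \<alpha> k. \<forall>E\<in>tfam A \<beta>. n \<le> Min E \<longrightarrow> E \<in> tfam A \<alpha>" for k
    using approx_family_finite[OF B lim]
    by (rule eventually_ball_finite)
      (use tfam_eventually_increasing[OF A] approx_family_less[OF B lim] in blast)
  then have "\<forall>k. \<exists>L. \<forall>\<beta>\<in>B \<alpha> k. \<forall>E\<in>tfam A \<beta>. L \<le> Min E \<longrightarrow> E \<in> tfam A \<alpha>"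
    unfolding eventually_sequentially by (meson order_refl)
  then obtain L where L: "\<And>k \<beta> E. \<beta> \<in> B \<alpha> k \<Longrightarrow> E \<in> tfam A \<beta> \<Longrightarrow> L k \<le> Min E \<Longrightarrow> E \<in> tfam A \<alpha>"
    by metis
  obtain m where m: "strict_mono m" "\<And>k. m k \<in> Ms k" "\<And>k. max (L k) (enumerate (Ms k) k) \<le> m k"
    using diagonal_sequence[of Ms "\<lambda>k. max (L k) (enumerate (Ms k) k)"] Ms(3) by metis
  have "range m \<subseteq> N"
    using m(2) antimonoD[OF Ms(2), of 0] Ms(1) by blast
  moreover have "infinite (range m)"
    using strict_mono_imp_inj_on[OF m(1)] range_inj_infinite by blast
  moreover have "spreads_into (range m) (tfam B \<alpha>) (tfam A \<alpha>)"
    using spreads_into_tfam_limit_diagonal[OF B lim Ms(2,3) _ L m(1,2)] Ms(4) m(3) by simp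
  ultimately show ?thesis by blast
qed

lemma ex_spreads_into_tfam:
  assumes "approx_family A" "approx_family B" "infinite N"
  shows "\<exists>M\<subseteq>N. infinite M \<and> spreads_into M (tfam B \<alpha>) (tfam A \<alpha>)"
  using assms(3)
proof (induction \<alpha> arbitrary: N rule: less_induct)
  case (less \<alpha>)
  show ?case
  proof (cases \<alpha> rule: ordinal_cases)
    case 1
    then have "spreads_into N (tfam B \<alpha>) (tfam A \<alpha>)"
      by (simp add: spreads_into_def tfam_zero)
    with less.prems show ?thesis by blast
  next
    case (2 \<beta>)
    obtain M where "M \<subseteq> N" "infinite M" "spreads_into M (tfam B \<beta>) (tfam A \<beta>)"
      using less.IH[OF is_succ_of_less[OF 2] less.prems] by blast
    with spreads_into_tfam_succ[OF 2] show ?thesis by blast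
  next
    case 3
    show ?thesis
      by (rule spreads_into_tfam_limit[OF assms(1,2) 3 less.prems less.IH])
  qed
qed

theorem proposition3p8:
  fixes A B :: "'a::wellorder \<Rightarrow> nat \<Rightarrow> 'a set" and \<alpha> :: 'a and N :: "nat set"
  assumes "\<forall>x::'a. countable {y. y < x}"
    and "approx_family A" and "approx_family B"
    and "infinite N"
  shows "\<exists>M. M \<subseteq> N \<and> infinite M \<and> restr_fam (tfam B \<alpha>) M \<subseteq> tfam A \<alpha>"
proof -
  obtain M where "M \<subseteq> N" "infinite M" "spreads_into M (tfam B \<alpha>) (tfam A \<alpha>)"
    using ex_spreads_into_tfam[OF assms(2-4)] by blast
  then show ?thesis
    using restr_fam_subset_if_spreads_into by blast
qed

end
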